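(* For the odd-cycle index coding problem, $\limsup_{\epsilon\to0}R^m_{lb}(\mathbf{0}+\epsilon\mathbf{1})<\frac m2$.
   Context: Odd-cycle index coding problem: $m\ge5$ odd; source $\mathbf{X}=(X_1,\dots,X_m)$ of i.i.d. Bernoulli$(1/2)$ bits; decoder $i\in[m]$ has side information $\mathbf{Y_i}=(X_{i-1},X_{i+1})$ (indices mod $m$, taken in $[m]$) and wants $X_i$; it is cast as a rate-distortion problem with distortion $d_i(\mathbf{x},\hat x_i)=\mathbf{1}\{\hat x_i\ne x_i\}$ and target $D_i=0$; rates in bits. $R^m_{lb}(\mathbf{D}+\epsilon\mathbf{1})=\sup_{\bar P}\inf_{\bar C}\bar R_{lb}-\epsilon$, where $\bar R_{lb}=\max_\sigma[I(\mathbf{X};V,U_{Y_{\sigma(1)}}|\mathbf{Y}_{\sigma(1)})+\sum_{k=2}^mI(\mathbf{X};U_{Y_{\sigma(k)}}|V,U_{Y_{\sigma(1)}},\dots,U_{Y_{\sigma(k-1)}},\mathbf{Y}_{\sigma(1)},\dots,\mathbf{Y}_{\sigma(k)})]$ over permutations $\sigma$ of $[m]$; $\bar P$ is the set of joint laws of $(\mathbf{X},\mathbf{Y_1},\dots,\mathbf{Y_m})$ with the given pairwise marginals of $(\mathbf{X},\mathbf{Y_i})$; $\bar C$ is the set of $(V,U_{Y_1},\dots,U_{Y_m})$ with $(\mathbf{Y_1},\dots,\mathbf{Y_m})\leftrightarrow\mathbf{X}\leftrightarrow(V,U_{Y_1},\dots,U_{Y_m})$ and functions $g_i$ with $E[d_i(\mathbf{X},g_i(V,U_{Y_i},\mathbf{Y_i}))]\le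 D_i+\epsilon$. *)

theory Defs
  imports "HOL-Probability.Probability" "HOL-Combinatorics.Multiset_Permutations"
begin

(* Discrete information measures (bits) for random variables given as functions
   of the outcome of a finitely supported pmf. *)
definition ent :: "'w pmf \<Rightarrow> ('w \<Rightarrow> 'a) \<Rightarrow> real" where
  "ent p f = - (\<Sum>y\<in>f ` set_pmf p. pmf (map_pmf f p) y * log 2 (pmf (map_pmf f p) y))"

definition cmi :: "'w pmf \<Rightarrow> ('w \<Rightarrow> 'a) \<Rightarrow> ('w \<Rightarrow> 'b) \<Rightarrow> ('w \<Rightarrow> 'c) \<Rightarrow> real" where
  "cmi p A B C = ent p (\<lambda>w. (A w, C w)) + ent p (\<lambda>w. (B w, C w))
                 - ent p (\<lambda>w. (A w, B w, C w)) - ent p C"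

(* Sources: X = (X_0,...,X_{m-1}) encoded as nat \<Rightarrow> bool (False outside {0..<m});
   Y_i encoded as component i of a function nat \<Rightarrow> bool \<times> bool.
   Indices are 0-based and taken mod m. *)
type_synonym xvec = "nat \<Rightarrow> bool"
type_synonym yvec = "nat \<Rightarrow> bool \<times> bool"
(* outcome of the full system: (X, (Y_i)_i, V, (U_{Y_i})_i); auxiliary alphabets are nat *)
type_synonym outc = "xvec \<times> yvec \<times> nat \<times> (nat \<Rightarrow> nat)"

definition Xlaw :: "nat \<Rightarrow> xvec pmf" where
  "Xlaw m = pmf_of_set {x. \<forall>j\<ge>m. \<not> x j}"

definition side :: "nat \<Rightarrow> xvec \<Rightarrow> nat \<Rightarrow> bool \<times> bool" where
  "side m x i = (x ((i + m - 1) mod m), x ((i + 1) mod m))"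

definition oX :: "outc \<Rightarrow> xvec" where "oX w = fst w"
definition oY :: "outc \<Rightarrow> yvec" where "oY w = fst (snd w)"
definition oV :: "outc \<Rightarrow> nat" where "oV w = fst (snd (snd w))"
definition oU :: "outc \<Rightarrow> nat \<Rightarrow> nat" where "oU w = snd (snd (snd w))"

definition Pbar :: "nat \<Rightarrow> (xvec \<times> yvec) pmf set" where
  "Pbar m = {P. (\<forall>i<m. map_pmf (\<lambda>(x, y). (x, y i)) P
                        = map_pmf (\<lambda>x. (x, side m x i)) (Xlaw m))
              \<and> (\<forall>(x, y)\<in>set_pmf P. \<forall>i\<ge>m. y i = (False, False))}"

(* Markov chain (Y_1..Y_m) -- X -- (V, U_{Y_1}, ..., U_{Y_m}) *)
definition markov :: "outc pmf \<Rightarrow> bool" where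
  "markov q \<longleftrightarrow> (\<forall>x y w.
      pmf (map_pmf (\<lambda>z. (oX z, oY z, oV z, oU z)) q) (x, y, w)
        * pmf (map_pmf oX q) x
      = pmf (map_pmf (\<lambda>z. (oX z, oY z)) q) (x, y)
        * pmf (map_pmf (\<lambda>z. (oX z, oV z, oU z)) q) (x, w))"

(* \<bar>C: admissible (V, U_{Y_i}) (finite alphabets) with decoders achieving distortion D_i + eps,
   here D_i = 0 and d_i(x, xhat) = 1{xhat \<noteq> x_i} *)
definition Cbar :: "nat \<Rightarrow> real \<Rightarrow> (xvec \<times> yvec) pmf \<Rightarrow> outc pmf set" where
  "Cbar m eps P = {q. finite (set_pmf q)
       \<and> map_pmf (\<lambda>z. (oX z, oY z)) q = P
       \<and> markov q
       \<and> (\<exists>g :: nat \<Rightarrow> nat \<times> nat \<times> (bool \<times> bool) \<Rightarrow> bool. \<forall>i<m.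
            measure_pmf.expectation q
              (\<lambda>z. of_bool (g i (oV z, oU z i, oY z i) \<noteq> oX z i)) \<le> 0 + eps)}"

(* the bracketed term for a permutation sigma (given as a list of the elements of {0..<m}) *)
definition Rterm :: "nat list \<Rightarrow> outc pmf \<Rightarrow> real" where
  "Rterm \<sigma> q =
     cmi q oX (\<lambda>z. (oV z, oU z (\<sigma>!0))) (\<lambda>z. oY z (\<sigma>!0))
   + (\<Sum>k\<in>{1..<length \<sigma>}.
        cmi q oX (\<lambda>z. oU z (\<sigma>!k))
          (\<lambda>z. (oV z, map (oU z) (take k \<sigma>), map (oY z) (take (Suc k) \<sigma>))))"

definition Rbar :: "nat \<Rightarrow> outc pmf \<Rightarrow> real" where
  "Rbar m q = Max ((\<lambda>\<sigma>. Rterm \<sigma> q) ` permutations_of_set {0..<m})"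

definition Rlb :: "nat \<Rightarrow> real \<Rightarrow> real" where
  "Rlb m eps = (SUP P\<in>Pbar m. INF q\<in>Cbar m eps P. Rbar m q) - eps"

end

theory Submission
  imports Defs
begin

text \<open>Each \<open>Y\<^sub>i\<close> is a function of \<open>X\<close>, so the only admissible joint law is the
  deterministic one, and \<open>R\<^sub>l\<^sub>b(\<epsilon>)\<close> is at most the value of \<open>R\<^sub>l\<^sub>b\<close>-bar at any admissible
  scheme. We take the uncoded scheme \<open>V = 0\<close>, \<open>U\<^sub>i = X\<^sub>i\<close>, which decodes without error
  and hence is admissible for every \<open>\<epsilon> \<ge> 0\<close>. Under a uniform source all the entropies
  are counts of revealed bits, so for a decoding order \<open>\<sigma>\<close> the \<open>k\<close>-th term of the chain is
  \<open>1\<close> if \<open>X\<^bsub>\<sigma>(k)\<^esub>\<close> is not yet determined by the earlier \<open>U\<close>'s and the side information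
  of \<open>\<sigma>(0), \<dots>, \<sigma>(k)\<close>, and \<open>0\<close> otherwise. Two cyclically adjacent bits cannot both
  contribute, since the later one lies in the side information of the earlier decoder;
  so the contributing bits form an independent set of the odd cycle \<open>C\<^sub>m\<close> and there are
  at most \<open>(m - 1)/2\<close> of them. The infimum over schemes is bounded below because
  conditional mutual information is nonnegative.\<close>

lemma ent_map_pmf: "ent (map_pmf g p) f = ent p (f \<circ> g)"
  unfolding ent_def by (simp add: pmf.map_comp image_comp)

lemma cmi_map_pmf: "cmi (map_pmf g p) A B C = cmi p (A \<circ> g) (B \<circ> g) (C \<circ> g)"
  unfolding cmi_def ent_map_pmf by (simp add: comp_def)

lemma pmf_map_pmf_eq_sum:
  assumes "finite (set_pmf p)"
  shows "pmf (map_pmf f p) y = (\<Sum>t\<in>{t\<in>set_pmf p. f t = y}. pmf p t)"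
proof -
  have "pmf (map_pmf f p) y = measure p (f -` {y} \<inter> set_pmf p)"
    by (simp add: pmf_map measure_Int_set_pmf)
  also have "\<dots> = (\<Sum>t\<in>f -` {y} \<inter> set_pmf p. pmf p t)"
    using assms by (intro measure_measure_pmf_finite) auto
  also have "f -` {y} \<inter> set_pmf p = {t\<in>set_pmf p. f t = y}" by auto
  finally show ?thesis .
qed

lemma ent_eq_sum:
  assumes fin: "finite (set_pmf p)"
  shows "ent p f = - (\<Sum>w\<in>set_pmf p. pmf p w * log 2 (pmf (map_pmf f p) (f w)))"
proof -
  let ?L = "\<lambda>y. log 2 (pmf (map_pmf f p) y)"
  have "(\<Sum>w\<in>set_pmf p. pmf p w * ?L (f w)) =
        (\<Sum>y\<in>f ` set_pmf p. \<Sum>w\<in>{w\<in>set_pmf p. f w = y}. pmf p w * ?L (f w))"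
    using fin by (rule sum.image_gen)
  also have "\<dots> = (\<Sum>y\<in>f ` set_pmf p. (\<Sum>w\<in>{w\<in>set_pmf p. f w = y}. pmf p w) * ?L y)"
    by (intro sum.cong refl) (auto simp: sum_distrib_right)
  also have "\<dots> = (\<Sum>y\<in>f ` set_pmf p. pmf (map_pmf f p) y * ?L y)"
    using fin by (simp add: pmf_map_pmf_eq_sum)
  finally show ?thesis unfolding ent_def by simp
qed

section \<open>Nonnegativity of conditional mutual information\<close>

lemma sum_pmf_Pair_eq_pmf_map_snd:
  assumes fin: "finite (set_pmf q)" and "finite A" and "fst ` set_pmf q \<subseteq> A"
  shows "(\<Sum>a\<in>A. pmf q (a, c)) = pmf (map_pmf snd q) c"
proof -
  have "(\<Sum>a\<in>A. pmf q (a, c)) = (\<Sum>t\<in>(\<lambda>a. (a, c)) ` A. pmf q t)"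
    by (subst sum.reindex) (auto simp: inj_on_def)
  also have "\<dots> = (\<Sum>t\<in>(\<lambda>a. (a, c)) ` A \<inter> set_pmf q. pmf q t)"
    using assms by (intro sum.mono_neutral_right) (auto simp: set_pmf_eq)
  also have "(\<lambda>a. (a, c)) ` A \<inter> set_pmf q = {t\<in>set_pmf q. snd t = c}"
    using assms by force
  finally show ?thesis
    using fin by (simp add: pmf_map_pmf_eq_sum)
qed

text \<open>The summands are the values of the law \<open>p(a|c) p(b|c) p(c)\<close> on the support of \<open>r\<close>.\<close>

lemma sum_conditional_product_le_1:
  fixes r :: "('a \<times> 'b \<times> 'c) pmf"
  assumes fin: "finite (set_pmf r)"
  shows "(\<Sum>t\<in>set_pmf r. pmf (map_pmf (\<lambda>t. (fst t, snd (snd t))) r) (fst t, snd (snd t))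
            * pmf (map_pmf (\<lambda>t. (fst (snd t), snd (snd t))) r) (fst (snd t), snd (snd t))
            / pmf (map_pmf (\<lambda>t. snd (snd t)) r) (snd (snd t))) \<le> 1"
    (is "(\<Sum>t\<in>_. ?f t) \<le> 1")
proof -
  define pAC where "pAC a c = pmf (map_pmf (\<lambda>t. (fst t, snd (snd t))) r) (a, c)" for a c
  define pBC where "pBC b c = pmf (map_pmf (\<lambda>t. (fst (snd t), snd (snd t))) r) (b, c)" for b c
  define pC where "pC = pmf (map_pmf (\<lambda>t. snd (snd t)) r)"
  define SA where "SA = fst ` set_pmf r"
  define SB where "SB = (\<lambda>t. fst (snd t)) ` set_pmf r"
  define SC where "SC = (\<lambda>t. snd (snd t)) ` set_pmf r"
  have fins: "finite SA" "finite SB" "finite SC"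
    using fin by (auto simp: SA_def SB_def SC_def)
  have margA: "(\<Sum>a\<in>SA. pAC a c) = pC c" for c
  proof -
    have "(\<Sum>a\<in>SA. pAC a c) = pmf (map_pmf snd (map_pmf (\<lambda>t. (fst t, snd (snd t))) r)) c"
      unfolding pAC_def using fin fins
      by (intro sum_pmf_Pair_eq_pmf_map_snd) (auto simp: SA_def image_image split_beta)
    then show ?thesis by (simp add: pC_def pmf.map_comp comp_def split_beta)
  qed
  have margB: "(\<Sum>b\<in>SB. pBC b c) = pC c" for c
  proof -
    have "(\<Sum>b\<in>SB. pBC b c) = pmf (map_pmf snd (map_pmf (\<lambda>t. (fst (snd t), snd (snd t))) r)) c"
      unfolding pBC_def using fin fins
      by (intro sum_pmf_Pair_eq_pmf_map_snd) (auto simp: SB_def image_image split_beta)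
    then show ?thesis by (simp add: pC_def pmf.map_comp comp_def split_beta)
  qed
  have "(\<Sum>t\<in>set_pmf r. ?f t) = (\<Sum>t\<in>set_pmf r. (\<lambda>(a, b, c). pAC a c * pBC b c / pC c) t)"
    by (intro sum.cong refl) (auto simp: pAC_def pBC_def pC_def split: prod.splits)
  also have "\<dots> \<le> (\<Sum>t\<in>SA \<times> SB \<times> SC. (\<lambda>(a, b, c). pAC a c * pBC b c / pC c) t)"
    using fins by (intro sum_mono2)
      (auto simp: SA_def SB_def SC_def pAC_def pBC_def pC_def, force+)
  also have "\<dots> = (\<Sum>a\<in>SA. \<Sum>b\<in>SB. \<Sum>c\<in>SC. pAC a c * pBC b c / pC c)"
    by (simp add: sum.cartesian_product)
  also have "\<dots> = (\<Sum>c\<in>SC. \<Sum>a\<in>SA. \<Sum>b\<in>SB. pAC a c * pBC b c / pC c)"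
    by (subst sum.swap) (simp add: sum.swap[of _ SB])
  also have "\<dots> = (\<Sum>c\<in>SC. (\<Sum>a\<in>SA. pAC a c) * (\<Sum>b\<in>SB. pBC b c) / pC c)"
    by (simp add: sum_product sum_divide_distrib)
  also have "\<dots> = (\<Sum>c\<in>SC. pC c)"
  proof (intro sum.cong refl)
    fix c assume "c \<in> SC"
    then have "pC c \<noteq> 0"
      unfolding pC_def SC_def by (auto simp: set_pmf_iff[symmetric] split_beta)
    then show "(\<Sum>a\<in>SA. pAC a c) * (\<Sum>b\<in>SB. pBC b c) / pC c = pC c"
      by (simp add: margA margB)
  qed
  also have "\<dots> = 1"
    unfolding pC_def using fins by (intro sum_pmf_eq_1) (auto simp: SC_def split_beta)
  finally show ?thesis .
qed

lemma log_ratio_ge_linear: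
  fixes p a b c :: real
  assumes "p > 0" "a > 0" "b > 0" "c > 0"
  shows "(p - a * b / c) / ln 2 \<le> p * (log 2 p + log 2 c - log 2 a - log 2 b)"
proof -
  define y where "y = a * b / (p * c)"
  have "y > 0" using assms by (simp add: y_def)
  then have "(1 - y) / ln 2 \<le> - ln y / ln 2"
    using ln_le_minus_one[of y] by (intro divide_right_mono) auto
  also have "- ln y / ln 2 = log 2 p + log 2 c - log 2 a - log 2 b"
    using assms by (simp add: y_def log_def ln_div ln_mult diff_divide_distrib add_divide_distrib)
  finally have "(1 - y) / ln 2 \<le> log 2 p + log 2 c - log 2 a - log 2 b" .
  then have "p * ((1 - y) / ln 2) \<le> p * (log 2 p + log 2 c - log 2 a - log 2 b)"
    using assms by (intro mult_left_mono) auto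
  moreover have "p * ((1 - y) / ln 2) = (p - a * b / c) / ln 2"
    using assms by (simp add: y_def field_simps)
  ultimately show ?thesis by simp
qed

lemma cmi_nonneg_components:
  fixes r :: "('a \<times> 'b \<times> 'c) pmf"
  assumes fin: "finite (set_pmf r)"
  shows "0 \<le> cmi r fst (\<lambda>t. fst (snd t)) (\<lambda>t. snd (snd t))"
proof -
  let ?a = "\<lambda>t. pmf (map_pmf (\<lambda>t. (fst t, snd (snd t))) r) (fst t, snd (snd t))"
  let ?b = "\<lambda>t. pmf (map_pmf (\<lambda>t. (fst (snd t), snd (snd t))) r) (fst (snd t), snd (snd t))"
  let ?c = "\<lambda>t. pmf (map_pmf (\<lambda>t. snd (snd t)) r) (snd (snd t))"
  have "cmi r fst (\<lambda>t. fst (snd t)) (\<lambda>t. snd (snd t))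
      = (\<Sum>t\<in>set_pmf r. pmf r t * (log 2 (pmf r t) + log 2 (?c t) - log 2 (?a t) - log 2 (?b t)))"
  proof -
    have "(\<lambda>t::'a \<times> 'b \<times> 'c. (fst t, fst (snd t), snd (snd t))) = id" by auto
    then show ?thesis
      unfolding cmi_def ent_eq_sum[OF fin]
      by (simp add: map_pmf_ident algebra_simps sum_subtractf sum.distrib sum_negf)
  qed
  also have "\<dots> \<ge> (\<Sum>t\<in>set_pmf r. (pmf r t - ?a t * ?b t / ?c t) / ln 2)"
    by (intro sum_mono log_ratio_ge_linear) (auto simp: pmf_positive)
  also have "(\<Sum>t\<in>set_pmf r. (pmf r t - ?a t * ?b t / ?c t) / ln 2)
      = (1 - (\<Sum>t\<in>set_pmf r. ?a t * ?b t / ?c t)) / ln 2"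
    using fin by (simp add: sum_divide_distrib[symmetric] sum_subtractf sum_pmf_eq_1)
  also have "\<dots> \<ge> 0"
    using sum_conditional_product_le_1[OF fin] by simp
  finally show ?thesis .
qed

lemma cmi_nonneg:
  assumes "finite (set_pmf p)"
  shows "0 \<le> cmi p A B C"
proof -
  have "0 \<le> cmi (map_pmf (\<lambda>w. (A w, B w, C w)) p) fst (\<lambda>t. fst (snd t)) (\<lambda>t. snd (snd t))"
    using assms by (intro cmi_nonneg_components) simp
  then show ?thesis
    unfolding cmi_map_pmf by (simp add: comp_def)
qed

section \<open>The uniform law on bit vectors\<close>

definition bitvecs :: "nat \<Rightarrow> xvec set" where
  "bitvecs m = {x. \<forall>j\<ge>m. \<not> x j}"

lemma
  assumes "finite T"
  shows finite_vanishing_outside: "finite {x::nat \<Rightarrow> bool. \<forall>j. j \<notin> T \<longrightarrow> \<not> x j}"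
    and card_vanishing_outside: "card {x::nat \<Rightarrow> bool. \<forall>j. j \<notin> T \<longrightarrow> \<not> x j} = 2 ^ card T"
proof -
  have bij: "bij_betw (\<lambda>x. {j. x j}) {x::nat \<Rightarrow> bool. \<forall>j. j \<notin> T \<longrightarrow> \<not> x j} (Pow T)"
    by (rule bij_betw_byWitness[where f'="\<lambda>B j. j \<in> B"]) auto
  show "finite {x::nat \<Rightarrow> bool. \<forall>j. j \<notin> T \<longrightarrow> \<not> x j}"
    using bij_betw_finite[OF bij] assms by simp
  show "card {x::nat \<Rightarrow> bool. \<forall>j. j \<notin> T \<longrightarrow> \<not> x j} = 2 ^ card T"
    using bij_betw_same_card[OF bij] assms by (simp add: card_Pow)
qed

lemma bitvecs_eq: "bitvecs m = {x. \<forall>j. j \<notin> {0..<m} \<longrightarrow> \<not> x j}"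
  unfolding bitvecs_def by auto

lemma finite_bitvecs: "finite (bitvecs m)"
  unfolding bitvecs_eq by (rule finite_vanishing_outside) simp

lemma card_bitvecs: "card (bitvecs m) = 2 ^ m"
  unfolding bitvecs_eq by (subst card_vanishing_outside) simp_all

lemma bitvecs_not_empty: "bitvecs m \<noteq> {}"
  unfolding bitvecs_def by auto

lemma Xlaw_eq_pmf_of_set: "Xlaw m = pmf_of_set (bitvecs m)"
  unfolding Xlaw_def bitvecs_def ..

lemma set_pmf_Xlaw: "set_pmf (Xlaw m) = bitvecs m"
  unfolding Xlaw_eq_pmf_of_set using finite_bitvecs bitvecs_not_empty by simp

lemma card_bitvecs_agreeing:
  assumes S: "S \<subseteq> {0..<m}" and x: "x \<in> bitvecs m"
  shows "card {t \<in> bitvecs m. \<forall>j\<in>S. t j = x j} = 2 ^ (m - card S)"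
proof -
  have "bij_betw (\<lambda>t j. j \<notin> S \<and> t j) {t \<in> bitvecs m. \<forall>j\<in>S. t j = x j}
          {z. \<forall>j. j \<notin> {0..<m} - S \<longrightarrow> \<not> z j}"
    by (rule bij_betw_byWitness[where f'="\<lambda>z j. if j \<in> S then x j else z j"])
       (use S x in \<open>auto simp: bitvecs_def fun_eq_iff\<close>)
  then have "card {t \<in> bitvecs m. \<forall>j\<in>S. t j = x j} = card {z. \<forall>j. j \<notin> {0..<m} - S \<longrightarrow> \<not> z j}"
    by (rule bij_betw_same_card)
  also have "\<dots> = 2 ^ card ({0..<m} - S)"
    by (rule card_vanishing_outside) simp
  also have "card ({0..<m} - S) = m - card S"
    using S by (simp add: card_Diff_subset finite_subset)
  finally show ?thesis .
qed

definition reveals :: "nat \<Rightarrow> (xvec \<Rightarrow> 'a) \<Rightarrow> nat set \<Rightarrow> bool" where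
  "reveals m G S \<longleftrightarrow> S \<subseteq> {0..<m} \<and>
     (\<forall>x\<in>bitvecs m. \<forall>x'\<in>bitvecs m. G x = G x' \<longleftrightarrow> (\<forall>j\<in>S. x j = x' j))"

lemma reveals_id: "reveals m (\<lambda>x. x) {0..<m}"
  unfolding reveals_def
proof (intro conjI ballI subset_refl)
  fix x x' assume x: "x \<in> bitvecs m" and x': "x' \<in> bitvecs m"
  show "x = x' \<longleftrightarrow> (\<forall>j\<in>{0..<m}. x j = x' j)"
  proof
    assume agree: "\<forall>j\<in>{0..<m}. x j = x' j"
    show "x = x'"
    proof
      fix j show "x j = x' j"
        using agree x x' by (cases "j < m") (auto simp: bitvecs_def)
    qed
  qed simp
qed

lemma reveals_const: "reveals m (\<lambda>x. c) {}"
  unfolding reveals_def by simp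

lemma reveals_Pair:
  "reveals m G S \<Longrightarrow> reveals m H T \<Longrightarrow> reveals m (\<lambda>x. (G x, H x)) (S \<union> T)"
  unfolding reveals_def prod.inject ball_Un by simp

lemma reveals_map:
  assumes "\<And>i. i \<in> set xs \<Longrightarrow> reveals m (\<lambda>x. G x i) (S i)"
  shows "reveals m (\<lambda>x. map (G x) xs) (\<Union>i\<in>set xs. S i)"
  using assms unfolding reveals_def map_eq_conv by (simp add: UN_subset_iff)

lemma ent_Xlaw_reveals:
  assumes rev: "reveals m G S"
  shows "ent (Xlaw m) G = card S"
proof -
  have S: "S \<subseteq> {0..<m}" and agree: "\<And>t x. t \<in> bitvecs m \<Longrightarrow> x \<in> bitvecs m \<Longrightarrow>
      G t = G x \<longleftrightarrow> (\<forall>j\<in>S. t j = x j)"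
    using rev unfolding reveals_def by auto
  have "card S \<le> m"
    using card_mono[OF _ S] by simp
  then have pow: "(2::real) ^ m = 2 ^ (m - card S) * 2 ^ card S"
    by (simp flip: power_add)
  have fiber: "pmf (map_pmf G (Xlaw m)) (G x) = 1 / 2 ^ card S" if x: "x \<in> bitvecs m" for x
  proof -
    have "bitvecs m \<inter> G -` {G x} = {t \<in> bitvecs m. \<forall>j\<in>S. t j = x j}"
      by (auto simp: agree[OF _ x])
    then have "pmf (map_pmf G (Xlaw m)) (G x) = 2 ^ (m - card S) / 2 ^ m"
      unfolding pmf_map Xlaw_eq_pmf_of_set
      using measure_pmf_of_set[OF bitvecs_not_empty finite_bitvecs]
      by (simp add: card_bitvecs_agreeing[OF S x] card_bitvecs)
    then show ?thesis
      by (simp add: pow)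
  qed
  have "ent (Xlaw m) G = - (\<Sum>x\<in>bitvecs m. pmf (Xlaw m) x * log 2 (1 / 2 ^ card S))"
    unfolding ent_eq_sum[of "Xlaw m", unfolded set_pmf_Xlaw, OF finite_bitvecs]
    by (simp add: fiber)
  also have "\<dots> = - log 2 (1 / 2 ^ card S)"
    using sum_pmf_eq_1[of "bitvecs m" "Xlaw m"] finite_bitvecs set_pmf_Xlaw
    by (simp add: sum_distrib_right[symmetric])
  also have "\<dots> = card S"
    by (simp add: log_divide log_nat_power)
  finally show ?thesis .
qed

lemma cmi_Xlaw_reveals:
  assumes B: "reveals m B SB" and C: "reveals m C SC"
  shows "cmi (Xlaw m) (\<lambda>x. x) B C = real (card (SB \<union> SC)) - real (card SC)"
proof -
  have "SB \<union> SC \<subseteq> {0..<m}"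
    using B C unfolding reveals_def by auto
  then have "{0..<m} \<union> SC = {0..<m}" and "{0..<m} \<union> (SB \<union> SC) = {0..<m}"
    by auto
  then have "ent (Xlaw m) (\<lambda>x. (x, C x)) = m" and "ent (Xlaw m) (\<lambda>x. (x, B x, C x)) = m"
    using ent_Xlaw_reveals[OF reveals_Pair[OF reveals_id C]]
      ent_Xlaw_reveals[OF reveals_Pair[OF reveals_id reveals_Pair[OF B C]]]
    by simp_all
  then show ?thesis
    unfolding cmi_def ent_Xlaw_reveals[OF reveals_Pair[OF B C]] ent_Xlaw_reveals[OF C]
    by simp
qed

section \<open>Independent sets of an odd cycle\<close>

definition cycle_nbrs :: "nat \<Rightarrow> nat \<Rightarrow> nat set" where
  "cycle_nbrs m i = {(i + m - 1) mod m, (i + 1) mod m}"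

lemma succ_mod_neq_self: "(u::nat) < m \<Longrightarrow> 2 \<le> m \<Longrightarrow> (u + 1) mod m \<noteq> u"
  by (cases "u + 1 = m") auto

lemma pred_succ_mod: "(u::nat) < m \<Longrightarrow> ((u + 1) mod m + m - 1) mod m = u"
  by (cases "u + 1 = m") auto

lemma inj_on_succ_mod: "inj_on (\<lambda>u::nat. (u + 1) mod m) {0..<m}"
proof (rule inj_onI)
  fix u v assume "u \<in> {0..<m}" "v \<in> {0..<m}" "(u + 1) mod m = (v + 1) mod m"
  then show "u = v"
    by (cases "u + 1 = m"; cases "v + 1 = m") auto
qed

lemma odd_cycle_independent_card:
  assumes I: "I \<subseteq> {0..<m}" and "odd m"
    and indep: "\<And>u. u \<in> I \<Longrightarrow> (u + 1) mod m \<notin> I"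
  shows "2 * card I \<le> m - 1"
proof -
  let ?succ = "\<lambda>u. (u + 1) mod m"
  have "m > 0" using \<open>odd m\<close> by (cases m) auto
  have "finite I" using I finite_subset by blast
  have "card (?succ ` I) = card I"
    using I by (intro card_image inj_on_subset[OF inj_on_succ_mod])
  moreover have "card (I \<union> ?succ ` I) = card I + card (?succ ` I)"
    using \<open>finite I\<close> indep by (intro card_Un_disjoint) auto
  moreover have "card (I \<union> ?succ ` I) \<le> m"
    using I \<open>m > 0\<close> by (intro card_mono[of "{0..<m}", simplified]) auto
  ultimately have "2 * card I \<le> m" by simp
  moreover have "2 * card I \<noteq> m" using \<open>odd m\<close> by auto
  ultimately show ?thesis by linarith
qed

section \<open>The uncoded scheme\<close>

definition side_vec :: "nat \<Rightarrow> xvec \<Rightarrow> yvec" where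
  "side_vec m x i = (if i < m then side m x i else (False, False))"

definition uncoded_outcome :: "nat \<Rightarrow> xvec \<Rightarrow> outc" where
  "uncoded_outcome m x = (x, side_vec m x, 0, \<lambda>i. of_bool (x i))"

definition uncoded_scheme :: "nat \<Rightarrow> outc pmf" where
  "uncoded_scheme m = map_pmf (uncoded_outcome m) (Xlaw m)"

lemma uncoded_outcome_simps [simp]:
  "oX (uncoded_outcome m x) = x" "oY (uncoded_outcome m x) = side_vec m x"
  "oV (uncoded_outcome m x) = 0" "oU (uncoded_outcome m x) = (\<lambda>i. of_bool (x i))"
  by (simp_all add: uncoded_outcome_def oX_def oY_def oV_def oU_def)

lemma reveals_bit: "i < m \<Longrightarrow> reveals m (\<lambda>x. of_bool (x i) :: nat) {i}"
  unfolding reveals_def by simp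

lemma reveals_side_vec: "i < m \<Longrightarrow> reveals m (\<lambda>x. side_vec m x i) (cycle_nbrs m i)"
  unfolding reveals_def side_vec_def side_def cycle_nbrs_def by auto

lemma cmi_uncoded_scheme:
  assumes B: "reveals m (\<lambda>x. B (uncoded_outcome m x)) {i}"
    and C: "reveals m (\<lambda>x. C (uncoded_outcome m x)) S"
  shows "cmi (uncoded_scheme m) oX B C = of_bool (i \<notin> S)"
proof -
  have "finite S"
    using C unfolding reveals_def by (auto intro: finite_subset)
  have "cmi (uncoded_scheme m) oX B C = real (card ({i} \<union> S)) - real (card S)"
    unfolding uncoded_scheme_def cmi_map_pmf comp_def uncoded_outcome_simps
    by (rule cmi_Xlaw_reveals[OF B C])
  also have "\<dots> = of_bool (i \<notin> S)"
    using \<open>finite S\<close> by (simp add: card_insert_if)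
  finally show ?thesis .
qed

text \<open>Under the uncoded scheme, the bits of \<open>X\<close> determined by
  \<open>(V, U\<^bsub>\<sigma>(0)\<^esub>, \<dots>, U\<^bsub>\<sigma>(k-1)\<^esub>, Y\<^bsub>\<sigma>(0)\<^esub>, \<dots>, Y\<^bsub>\<sigma>(k)\<^esub>)\<close>.\<close>

definition known_bits :: "nat \<Rightarrow> nat list \<Rightarrow> nat \<Rightarrow> nat set" where
  "known_bits m \<sigma> k = set (take k \<sigma>) \<union> (\<Union>i\<in>set (take (Suc k) \<sigma>). cycle_nbrs m i)"

lemma cmi_uncoded_first_term:
  assumes "set \<sigma> \<subseteq> {0..<m}" and "\<sigma> \<noteq> []"
  shows "cmi (uncoded_scheme m) oX (\<lambda>z. (oV z, oU z (\<sigma>!0))) (\<lambda>z. oY z (\<sigma>!0))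
    = of_bool (\<sigma>!0 \<notin> known_bits m \<sigma> 0)"
proof -
  have "\<sigma>!0 < m" using assms by (cases \<sigma>) auto
  moreover have "known_bits m \<sigma> 0 = cycle_nbrs m (\<sigma>!0)"
    using \<open>\<sigma> \<noteq> []\<close> by (cases \<sigma>) (auto simp: known_bits_def)
  ultimately show ?thesis
    using reveals_Pair[OF reveals_const reveals_bit] reveals_side_vec
    by (intro cmi_uncoded_scheme) auto
qed

lemma cmi_uncoded_later_term:
  assumes \<sigma>: "set \<sigma> \<subseteq> {0..<m}" and k: "k < length \<sigma>"
  shows "cmi (uncoded_scheme m) oX (\<lambda>z. oU z (\<sigma>!k))
      (\<lambda>z. (oV z, map (oU z) (take k \<sigma>), map (oY z) (take (Suc k) \<sigma>)))
    = of_bool (\<sigma>!k \<notin> known_bits m \<sigma> k)"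
proof (rule cmi_uncoded_scheme)
  have "set (take k \<sigma>) \<subseteq> {0..<m}" "set (take (Suc k) \<sigma>) \<subseteq> {0..<m}"
    using set_take_subset[of k \<sigma>] set_take_subset[of "Suc k" \<sigma>] \<sigma> by auto
  then have "reveals m (\<lambda>x. (0::nat, map (\<lambda>i. of_bool (x i) :: nat) (take k \<sigma>),
        map (side_vec m x) (take (Suc k) \<sigma>))) ({} \<union> ((\<Union>i\<in>set (take k \<sigma>). {i})
        \<union> (\<Union>i\<in>set (take (Suc k) \<sigma>). cycle_nbrs m i)))"
    by (intro reveals_Pair reveals_const reveals_map reveals_bit reveals_side_vec) auto
  then show "reveals m (\<lambda>x. (\<lambda>z. (oV z, map (oU z) (take k \<sigma>), map (oY z) (take (Suc k) \<sigma>)))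
      (uncoded_outcome m x)) (known_bits m \<sigma> k)"
    by (simp add: known_bits_def)
  show "reveals m (\<lambda>x. (\<lambda>z. oU z (\<sigma>!k)) (uncoded_outcome m x)) {\<sigma>!k}"
    using \<sigma> k by (simp add: reveals_bit subset_iff)
qed

lemma Rterm_uncoded_scheme:
  assumes "\<sigma> \<in> permutations_of_set {0..<m}" and "0 < m"
  shows "Rterm \<sigma> (uncoded_scheme m) = card {k \<in> {0..<m}. \<sigma>!k \<notin> known_bits m \<sigma> k}"
proof -
  have \<sigma>: "set \<sigma> = {0..<m}" "length \<sigma> = m"
    using permutations_of_setD(1)[OF assms(1)] length_finite_permutations_of_set[OF assms(1)]
    by simp_all
  moreover have "\<sigma> \<noteq> []" using \<sigma> \<open>0 < m\<close> by auto
  ultimately have "Rterm \<sigma> (uncoded_scheme m) = (\<Sum>k\<in>{0..<m}. of_bool (\<sigma>!k \<notin> known_bits m \<sigma> k))"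
    unfolding Rterm_def
    using cmi_uncoded_first_term[of \<sigma> m] cmi_uncoded_later_term[of \<sigma> m] \<open>0 < m\<close>
    by (simp add: sum.atLeast_Suc_lessThan[OF \<open>0 < m\<close>] del: sum.op_ivl_Suc)
  then show ?thesis
    by (simp add: Int_def)
qed

lemma cycle_nbrs_subset_known_bits:
  assumes "j \<le> k" and "k < length \<sigma>"
  shows "cycle_nbrs m (\<sigma>!j) \<subseteq> known_bits m \<sigma> k"
proof -
  have "take (Suc k) \<sigma> ! j \<in> set (take (Suc k) \<sigma>)"
    using assms by (intro nth_mem) simp
  then have "\<sigma>!j \<in> set (take (Suc k) \<sigma>)"
    using assms by simp
  then show ?thesis
    unfolding known_bits_def by blast
qed

text \<open>A bit that is new to decoder \<open>\<sigma>(k)\<close> is not a neighbour of a bit that was new to an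
  earlier decoder: the earlier decoder's side information already exposed it.\<close>

lemma new_bits_not_adjacent:
  assumes \<sigma>: "\<sigma> \<in> permutations_of_set {0..<m}" and "3 \<le> m"
    and j: "j < m" "\<sigma>!j \<notin> known_bits m \<sigma> j"
    and k: "k < m" "\<sigma>!k \<notin> known_bits m \<sigma> k"
  shows "\<sigma>!k \<noteq> (\<sigma>!j + 1) mod m"
proof
  assume succ: "\<sigma>!k = (\<sigma>!j + 1) mod m"
  have "set \<sigma> = {0..<m}" and len: "length \<sigma> = m"
    using permutations_of_setD(1)[OF \<sigma>] length_finite_permutations_of_set[OF \<sigma>] by simp_all
  then have "\<sigma>!j < m"
    using nth_mem[of j \<sigma>] j by auto
  consider "j < k" | "j = k" | "k < j" by linarith
  then show False
  proof cases
    case 1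
    then have "\<sigma>!k \<in> known_bits m \<sigma> k"
      using cycle_nbrs_subset_known_bits[of j k \<sigma> m] succ len k by (auto simp: cycle_nbrs_def)
    then show False using k by simp
  next
    case 2
    then show False
      using succ succ_mod_neq_self[OF \<open>\<sigma>!j < m\<close>] \<open>3 \<le> m\<close> by simp
  next
    case 3
    have "\<sigma>!j = (\<sigma>!k + m - 1) mod m"
      using succ pred_succ_mod[OF \<open>\<sigma>!j < m\<close>] by simp
    then have "\<sigma>!j \<in> known_bits m \<sigma> j"
      using cycle_nbrs_subset_known_bits[of k j \<sigma> m] 3 len j by (auto simp: cycle_nbrs_def)
    then show False using j by simp
  qed
qed

lemma card_new_bits_le:
  assumes \<sigma>: "\<sigma> \<in> permutations_of_set {0..<m}" and "odd m" and "3 \<le> m"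
  shows "2 * card {k \<in> {0..<m}. \<sigma>!k \<notin> known_bits m \<sigma> k} \<le> m - 1"
proof -
  let ?K = "{k \<in> {0..<m}. \<sigma>!k \<notin> known_bits m \<sigma> k}"
  have set: "set \<sigma> = {0..<m}" and "distinct \<sigma>" and len: "length \<sigma> = m"
    using permutations_of_setD[OF \<sigma>] length_finite_permutations_of_set[OF \<sigma>] by simp_all
  then have "inj_on ((!) \<sigma>) ?K"
    by (intro inj_on_nth) auto
  then have "card ((!) \<sigma> ` ?K) = card ?K"
    by (rule card_image)
  have new_bits: "(!) \<sigma> ` ?K \<subseteq> {0..<m}"
    using nth_mem[of _ \<sigma>] set len by auto
  have "2 * card ((!) \<sigma> ` ?K) \<le> m - 1"
    using new_bits \<open>odd m\<close>
    by (rule odd_cycle_independent_card) (use new_bits_not_adjacent[OF \<sigma> \<open>3 \<le> m\<close>] in force)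
  with \<open>card ((!) \<sigma> ` ?K) = card ?K\<close> show ?thesis by simp
qed

lemma pmf_map_pmf_graph:
  "pmf (map_pmf (\<lambda>x. (x, f x)) p) (a, b) = (if b = f a then pmf p a else 0)"
proof -
  have "(\<lambda>x. (x, f x)) -` {(a, b)} = (if b = f a then {a} else {})" by auto
  then show ?thesis by (simp add: pmf_map measure_pmf_single)
qed

lemma Pbar_eq:
  assumes "0 < m"
  shows "Pbar m = {map_pmf (\<lambda>x. (x, side_vec m x)) (Xlaw m)}"
proof
  show "{map_pmf (\<lambda>x. (x, side_vec m x)) (Xlaw m)} \<subseteq> Pbar m"
    unfolding Pbar_def by (auto simp: pmf.map_comp comp_def side_vec_def intro!: map_pmf_cong)
  show "Pbar m \<subseteq> {map_pmf (\<lambda>x. (x, side_vec m x)) (Xlaw m)}"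
  proof
    fix P assume P: "P \<in> Pbar m"
    have "map_pmf fst (map_pmf (\<lambda>(x, y). (x, y 0)) P)
        = map_pmf fst (map_pmf (\<lambda>x. (x, side m x 0)) (Xlaw m))"
      using P \<open>0 < m\<close> unfolding Pbar_def by auto
    then have X: "map_pmf fst P = Xlaw m"
      by (simp add: pmf.map_comp comp_def split_beta map_pmf_ident)
    have Y: "y = side_vec m x" if "(x, y) \<in> set_pmf P" for x y
    proof
      fix i show "y i = side_vec m x i"
      proof (cases "i < m")
        case True
        then have "set_pmf (map_pmf (\<lambda>(x, y). (x, y i)) P)
            = set_pmf (map_pmf (\<lambda>x. (x, side m x i)) (Xlaw m))"
          using P unfolding Pbar_def by auto
        moreover have "(x, y i) \<in> set_pmf (map_pmf (\<lambda>(x, y). (x, y i)) P)"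
          using that by force
        ultimately show ?thesis using True by (auto simp: side_vec_def)
      qed (use P that in \<open>auto simp: Pbar_def side_vec_def\<close>)
    qed
    have "map_pmf (\<lambda>z. (fst z, side_vec m (fst z))) P = map_pmf id P"
      by (rule map_pmf_cong) (auto dest: Y)
    then have "P = map_pmf (\<lambda>z. (fst z, side_vec m (fst z))) P"
      by simp
    also have "\<dots> = map_pmf (\<lambda>x. (x, side_vec m x)) (Xlaw m)"
      by (simp flip: X add: pmf.map_comp comp_def)
    finally show "P \<in> {map_pmf (\<lambda>x. (x, side_vec m x)) (Xlaw m)}" by simp
  qed
qed

lemma markov_uncoded_scheme: "markov (uncoded_scheme m)"
  unfolding markov_def uncoded_scheme_def
  by (simp add: pmf.map_comp comp_def map_pmf_ident pmf_map_pmf_graph)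

lemma uncoded_scheme_in_Cbar:
  assumes "0 \<le> eps"
  shows "uncoded_scheme m \<in> Cbar m eps (map_pmf (\<lambda>x. (x, side_vec m x)) (Xlaw m))"
proof -
  let ?g = "\<lambda>i (v::nat, u::nat, y::bool \<times> bool). u \<noteq> 0"
  have "measure_pmf.expectation (uncoded_scheme m)
      (\<lambda>z. of_bool (?g i (oV z, oU z i, oY z i) \<noteq> oX z i) :: real) = 0" for i
    by (simp add: uncoded_scheme_def)
  then show ?thesis
    unfolding Cbar_def using assms finite_bitvecs markov_uncoded_scheme
    by (auto simp: uncoded_scheme_def set_pmf_Xlaw pmf.map_comp comp_def intro!: exI[of _ ?g])
qed

lemma Rbar_nonneg:
  assumes "finite (set_pmf q)"
  shows "0 \<le> Rbar m q"
proof -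
  have "[0..<m] \<in> permutations_of_set {0..<m}"
    by (simp add: permutations_of_set_def)
  then have "Rterm [0..<m] q \<le> Rbar m q"
    unfolding Rbar_def by (intro Max_ge) auto
  moreover have "0 \<le> Rterm [0..<m] q"
    unfolding Rterm_def using assms by (intro add_nonneg_nonneg sum_nonneg cmi_nonneg)
  ultimately show ?thesis by linarith
qed

lemma Rbar_uncoded_scheme_le:
  assumes "odd m" and "3 \<le> m"
  shows "Rbar m (uncoded_scheme m) \<le> (real m - 1) / 2"
proof -
  have "Rterm \<sigma> (uncoded_scheme m) \<le> (real m - 1) / 2"
    if "\<sigma> \<in> permutations_of_set {0..<m}" for \<sigma>
    using Rterm_uncoded_scheme[OF that] card_new_bits_le[OF that assms] \<open>3 \<le> m\<close> by simp
  moreover have "permutations_of_set {0..<m} \<noteq> {}"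
    by (auto simp: permutations_of_set_def intro: exI[of _ "[0..<m]"])
  ultimately show ?thesis
    unfolding Rbar_def by (subst Max_le_iff) auto
qed

lemma Rlb_le:
  assumes "odd m" and "3 \<le> m" and "0 \<le> eps"
  shows "Rlb m eps \<le> (real m - 1) / 2"
proof -
  let ?P = "map_pmf (\<lambda>x. (x, side_vec m x)) (Xlaw m)"
  have "bdd_below (Rbar m ` Cbar m eps ?P)"
    by (rule bdd_belowI[of _ 0]) (auto simp: Cbar_def intro: Rbar_nonneg)
  then have "(INF q\<in>Cbar m eps ?P. Rbar m q) \<le> Rbar m (uncoded_scheme m)"
    using uncoded_scheme_in_Cbar[where m=m, OF \<open>0 \<le> eps\<close>] by (intro cInf_lower imageI)
  also have "\<dots> \<le> (real m - 1) / 2"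
    using assms by (intro Rbar_uncoded_scheme_le)
  finally have "(INF q\<in>Cbar m eps ?P. Rbar m q) \<le> (real m - 1) / 2" .
  moreover have "Pbar m = {?P}"
    using \<open>3 \<le> m\<close> by (intro Pbar_eq) simp
  ultimately show ?thesis
    unfolding Rlb_def using \<open>0 \<le> eps\<close> by simp
qed

theorem lemma3:
  fixes m :: nat
  assumes "odd m" and "m \<ge> 5"
  shows "Limsup (at_right 0) (\<lambda>eps. ereal (Rlb m eps)) < ereal (real m / 2)"
proof -
  have "eventually (\<lambda>eps. ereal (Rlb m eps) \<le> ereal ((real m - 1) / 2)) (at_right (0::real))"
    using eventually_at_right_less[of "0::real"]
    by eventually_elim (use assms Rlb_le in auto)
  then have "Limsup (at_right 0) (\<lambda>eps. ereal (Rlb m eps)) \<le> ereal ((real m - 1) / 2)"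
    by (rule Limsup_bounded)
  also have "\<dots> < ereal (real m / 2)" by simp
  finally show ?thesis .
qed

end
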